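(* Let $\kappa$ be the critical scale and $S=S_\kappa$ the output of algorithm StochKnap (any parameter $C>0$). If $\mathcal A$ is any adaptive policy that selects items only from $N\setminus S$ and has cost at most $B$, then $\Pr[R(\mathcal A)<\kappa]\ge1-\epsilon$. In particular, for every adaptive policy on $N$ of cost at most $B$ selecting the random set $O$, $\Pr[R(O\setminus S)\ge\kappa]\le\epsilon$.
   Context: Algorithm StochKnap$(N,c,R,B,\epsilon)$ with parameter $C>0$: $N$ is a finite set of items, item $i$ has cost $c(i)>0$ and a nonnegative random reward $R(i)$, rewards independent; $W\ge1$ is an integer with $\sum_{i\in N}\mathbb E[R(i)]\le W$; $B>0$, $\epsilon\in(0,1)$. Let $T=\{i\in N: c(i)\le B\}$ and $D=CB$. For $\tau>0$ let $r_\tau(i)=\mathbb E[\min\{R(i)/\tau,1\}]$. Order $T$ as $i_1,i_2,\ldots$ with $r_\tau(i_j)/c(i_j)$ nonincreasing. If $c(T)\ge D$, let $t$ be the smallest index with $\sum_{j\le t}c(i_j)\ge D$, set $S_\tau=\{i_1,\ldots,i_t\}$ and slope $s_\tau=r_\tau(i_t)/c(i_t)$; otherwise $S_\tau=T$, $s_\tau=0$. Scale $\tau$ is rich if $s_\tau>\epsilon/B$, poor otherwise. Scales $\mathcal G=\{2^\ell:\ell\in\mathbb Z,0\le\ell\le\lceil\log_2W\rceil\}$; critical scale $\kappa$ = smallest poor scale in $\mathcal G$ (assumed to exist); output $S=S_\kappa$. For a set $I$, $R(I)=\sum_{i\in I}R(i)$. An adaptive policy sequentially selects distinct items, each choice possibly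 depending on previously observed rewards and internal randomness independent of unselected rewards; cost at most $B$ means the selected items always have total cost at most $B$; $R(\mathcal A)$ is the total reward of selected items. *)

theory Defs
  imports "HOL-Probability.Probability"
begin

definition rtau :: "'w measure \<Rightarrow> ('i \<Rightarrow> 'w \<Rightarrow> real) \<Rightarrow> real \<Rightarrow> 'i \<Rightarrow> real" where
  "rtau M R \<tau> i = (\<integral>\<omega>. min (R i \<omega> / \<tau>) 1 \<partial>M)"

definition Tset :: "'i set \<Rightarrow> ('i \<Rightarrow> real) \<Rightarrow> real \<Rightarrow> 'i set" where
  "Tset N c B = {i \<in> N. c i \<le> B}"

text \<open>A valid ordering of T at scale tau (0-based: sigma 0, sigma 1, ... are i_1, i_2, ...),
  with r_tau / c nonincreasing.\<close>
definition valid_order :: "'w measure \<Rightarrow> ('i \<Rightarrow> 'w \<Rightarrow> real) \<Rightarrow> 'i set \<Rightarrow> ('i \<Rightarrow> real) \<Rightarrow> real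
    \<Rightarrow> real \<Rightarrow> (nat \<Rightarrow> 'i) \<Rightarrow> bool" where
  "valid_order M R N c B \<tau> \<sigma> \<longleftrightarrow>
     bij_betw \<sigma> {..<card (Tset N c B)} (Tset N c B) \<and>
     (\<forall>j k. j \<le> k \<and> k < card (Tset N c B) \<longrightarrow>
        rtau M R \<tau> (\<sigma> k) / c (\<sigma> k) \<le> rtau M R \<tau> (\<sigma> j) / c (\<sigma> j))"

definition cutoff :: "('i \<Rightarrow> real) \<Rightarrow> (nat \<Rightarrow> 'i) \<Rightarrow> real \<Rightarrow> nat" where
  "cutoff c \<sigma> D = (LEAST t. (\<Sum>j<t. c (\<sigma> j)) \<ge> D)"

definition S_tau :: "'i set \<Rightarrow> ('i \<Rightarrow> real) \<Rightarrow> real \<Rightarrow> real \<Rightarrow> (nat \<Rightarrow> 'i) \<Rightarrow> 'i set" where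
  "S_tau N c B C \<sigma> =
     (if sum c (Tset N c B) \<ge> C * B then \<sigma> ` {..<cutoff c \<sigma> (C * B)} else Tset N c B)"

definition slope :: "'w measure \<Rightarrow> ('i \<Rightarrow> 'w \<Rightarrow> real) \<Rightarrow> 'i set \<Rightarrow> ('i \<Rightarrow> real) \<Rightarrow> real \<Rightarrow> real
    \<Rightarrow> real \<Rightarrow> (nat \<Rightarrow> 'i) \<Rightarrow> real" where
  "slope M R N c B C \<tau> \<sigma> =
     (if sum c (Tset N c B) \<ge> C * B then
        (let i = \<sigma> (cutoff c \<sigma> (C * B) - 1) in rtau M R \<tau> i / c i)
      else 0)"

definition poor :: "'w measure \<Rightarrow> ('i \<Rightarrow> 'w \<Rightarrow> real) \<Rightarrow> 'i set \<Rightarrow> ('i \<Rightarrow> real) \<Rightarrow> real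
    \<Rightarrow> real \<Rightarrow> real \<Rightarrow> real \<Rightarrow> (nat \<Rightarrow> 'i) \<Rightarrow> bool" where
  "poor M R N c B C \<epsilon> \<tau> \<sigma> \<longleftrightarrow> \<not> (slope M R N c B C \<tau> \<sigma> > \<epsilon> / B)"

definition scales :: "nat \<Rightarrow> real set" where
  "scales W = {(2::real) ^ l | l::nat. int l \<le> \<lceil>log 2 (real W)\<rceil>}"

definition crit_scale :: "'w measure \<Rightarrow> ('i \<Rightarrow> 'w \<Rightarrow> real) \<Rightarrow> 'i set \<Rightarrow> ('i \<Rightarrow> real) \<Rightarrow> nat
    \<Rightarrow> real \<Rightarrow> real \<Rightarrow> real \<Rightarrow> (real \<Rightarrow> nat \<Rightarrow> 'i) \<Rightarrow> real" where
  "crit_scale M R N c W B C \<epsilon> \<sigma> = Min {\<tau> \<in> scales W. poor M R N c B C \<epsilon> \<tau> (\<sigma> \<tau>)}"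

text \<open>A policy maps its internal random seed u and the history (list of selected items with
  their observed rewards) to the next item, or None to stop.  Selecting an already selected
  item also stops the run (the history then no longer changes).\<close>
fun policy_run :: "('u \<Rightarrow> ('i \<times> real) list \<Rightarrow> 'i option) \<Rightarrow> 'u \<Rightarrow> ('i \<Rightarrow> real) \<Rightarrow> nat
    \<Rightarrow> ('i \<times> real) list" where
  "policy_run \<pi> u r 0 = []"
| "policy_run \<pi> u r (Suc n) =
     (let h = policy_run \<pi> u r n in
       case \<pi> u h of
         None \<Rightarrow> h
       | Some i \<Rightarrow> (if i \<in> fst ` set h then h else h @ [(i, r i)]))"

text \<open>Set of items selected (the run is complete after card N steps when all choices lie in N).\<close>
definition selected :: "'i set \<Rightarrow> ('u \<Rightarrow> ('i \<times> real) list \<Rightarrow> 'i option) \<Rightarrow> 'u \<Rightarrow> ('i \<Rightarrow> real)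
    \<Rightarrow> 'i set" where
  "selected N \<pi> u r = fst ` set (policy_run \<pi> u r (card N))"

definition adaptive_policy :: "'w measure \<Rightarrow> ('i \<Rightarrow> 'w \<Rightarrow> real) \<Rightarrow> 'i set \<Rightarrow> ('i \<Rightarrow> real)
    \<Rightarrow> real \<Rightarrow> 'u measure \<Rightarrow> ('w \<Rightarrow> 'u) \<Rightarrow> 'i set \<Rightarrow> ('u \<Rightarrow> ('i \<times> real) list \<Rightarrow> 'i option)
    \<Rightarrow> bool" where
  "adaptive_policy M R N c B Mu U A \<pi> \<longleftrightarrow>
     (\<forall>u h i. \<pi> u h = Some i \<longrightarrow> i \<in> A) \<and>
     (AE \<omega> in M. sum c (selected N \<pi> (U \<omega>) (\<lambda>i. R i \<omega>)) \<le> B) \<and>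
     (\<forall>i\<in>N. {p \<in> space (Mu \<Otimes>\<^sub>M PiM N (\<lambda>_. borel)). i \<in> selected N \<pi> (fst p) (snd p)}
              \<in> sets (Mu \<Otimes>\<^sub>M PiM N (\<lambda>_. borel)))"

end

theory Submission
  imports Defs
begin

text \<open>At the critical scale \<open>\<kappa>\<close> every item of cost at most \<open>B\<close> outside \<open>S\<close> has
  \<open>r\<^sub>\<kappa>(i) \<le> (\<epsilon>/B) c(i)\<close>, and costlier items are never selected. A policy decides whether to select
  item \<open>i\<close> before seeing \<open>R(i)\<close>, so the expected truncated reward \<open>\<Sum> min(R(i)/\<kappa>, 1)\<close> of the items it
  selects outside \<open>S\<close> equals \<open>\<Sum>\<^sub>i Pr[i selected] r\<^sub>\<kappa>(i) \<le> (\<epsilon>/B) E[cost] \<le> \<epsilon>\<close>. Since a reward of at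
  least \<open>\<kappa>\<close> forces this truncated sum to be at least 1, Markov's inequality gives the bound.\<close>

lemma set_policy_run_mono: "set (policy_run \<pi> u r n) \<subseteq> set (policy_run \<pi> u r (Suc n))"
  by (auto simp: Let_def split: option.split)

lemma policy_run_in:
  assumes "\<forall>u h i. \<pi> u h = Some i \<longrightarrow> i \<in> A"
  shows "fst ` set (policy_run \<pi> u r n) \<subseteq> A"
  using assms by (induction n) (auto simp: Let_def split: option.split)

lemma policy_run_cong:
  assumes "\<forall>u h i. \<pi> u h = Some i \<longrightarrow> i \<in> A" and "\<forall>i\<in>A. r i = r' i"
  shows "policy_run \<pi> u r n = policy_run \<pi> u r' n"
  using assms by (induction n) (auto simp: Let_def split: option.split)

text \<open>Until item \<open>j\<close> is selected, the run never looks at the reward of \<open>j\<close>; once it is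
  selected under one reward vector, it is selected under the other as well.\<close>
lemma policy_run_fun_upd:
  assumes "\<forall>i. i \<noteq> j \<longrightarrow> r i = r' i"
  shows "(policy_run \<pi> u r n = policy_run \<pi> u r' n \<and> j \<notin> fst ` set (policy_run \<pi> u r n)) \<or>
    (j \<in> fst ` set (policy_run \<pi> u r n) \<and> j \<in> fst ` set (policy_run \<pi> u r' n))"
proof (induction n)
  case 0
  then show ?case by simp
next
  case (Suc n)
  then show ?case
  proof
    assume same: "policy_run \<pi> u r n = policy_run \<pi> u r' n \<and> j \<notin> fst ` set (policy_run \<pi> u r n)"
    show ?case
    proof (cases "\<pi> u (policy_run \<pi> u r n)")
      case None
      then show ?thesis using same by (auto simp: Let_def)
    next
      case (Some i)
      then show ?thesis using same assms by (cases "i = j") (auto simp: Let_def)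
    qed
  next
    assume "j \<in> fst ` set (policy_run \<pi> u r n) \<and> j \<in> fst ` set (policy_run \<pi> u r' n)"
    then show ?case
      using image_mono[OF set_policy_run_mono[of \<pi> u r n], of fst]
        image_mono[OF set_policy_run_mono[of \<pi> u r' n], of fst] by blast
  qed
qed

lemma selected_subset:
  assumes "\<forall>u h i. \<pi> u h = Some i \<longrightarrow> i \<in> A"
  shows "selected N \<pi> u r \<subseteq> A"
  unfolding selected_def using policy_run_in[OF assms] by blast

lemma selected_cong:
  assumes "\<forall>u h i. \<pi> u h = Some i \<longrightarrow> i \<in> A" and "\<forall>i\<in>A. r i = r' i"
  shows "selected N \<pi> u r = selected N \<pi> u r'"
  unfolding selected_def using policy_run_cong[OF assms] by simp

lemma mem_selected_fun_upd: "j \<in> selected N \<pi> u (r(j := y)) \<longleftrightarrow> j \<in> selected N \<pi> u r"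
  unfolding selected_def using policy_run_fun_upd[of j r "r(j := y)" \<pi> u "card N"] by auto

lemma integral_indicator_mult_component_PiM:
  fixes P :: "'i \<Rightarrow> 'a measure" and h :: "'a \<Rightarrow> real"
  assumes P_prob: "\<And>i. prob_space (P i)" and P_space: "\<And>i. space (P i) = UNIV"
    and "finite I" "j \<in> I" and G: "G \<in> sets (PiM I P)"
    and G_invariant: "\<And>x y. x \<in> space (PiM I P) \<Longrightarrow> x(j := y) \<in> G \<longleftrightarrow> x \<in> G"
    and h: "h \<in> borel_measurable (P j)" "\<And>y. \<bar>h y\<bar> \<le> 1"
  shows "(\<integral>x. indicator G x * h (x j) \<partial>PiM I P) = measure (PiM I P) G * (\<integral>y. h y \<partial>P j)"
proof -
  interpret product_prob_space P I
    by (simp add: product_prob_space_def product_prob_space_axioms_def product_sigma_finite_def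
        P_prob prob_space_imp_sigma_finite)
  obtain J where J: "I = insert j J" "j \<notin> J" "finite J"
    using \<open>j \<in> I\<close> \<open>finite I\<close> by (metis finite_insert mk_disjoint_insert)
  define g :: "('i \<Rightarrow> 'a) \<Rightarrow> real" where "g x = indicator G (x(j := undefined))" for x
  have indicator_upd: "indicator G (x(j := y)) = g x" if "x \<in> space (PiM J P)" for x y
  proof -
    have "x(j := undefined) \<in> space (PiM I P)"
      using that J P_space by (auto simp: space_PiM PiE_def extensional_def)
    then show ?thesis using G_invariant[of "x(j := undefined)" y] by (simp add: g_def indicator_def)
  qed
  have integrable_bounded: "integrable (PiM I P) f"
    if "f \<in> borel_measurable (PiM I P)" "\<And>x. \<bar>f x\<bar> \<le> 1" for f :: "_ \<Rightarrow> real"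
    by (rule finite_measure.integrable_const_bound[where B=1]) (use that in auto)
  have "integrable (PiM I P) (\<lambda>x. indicator G x * h (x j))"
    using G h \<open>j \<in> I\<close> by (intro integrable_bounded) (simp_all add: abs_mult mult_le_one)
  then have "(\<integral>x. indicator G x * h (x j) \<partial>PiM I P)
      = (\<integral>x. (\<integral>y. indicator G (x(j := y)) * h y \<partial>P j) \<partial>PiM J P)"
    using product_integral_insert[OF J(3,2), of "\<lambda>x. indicator G x * h (x j)"] J(1) by simp
  also have "\<dots> = (\<integral>x. g x * (\<integral>y. h y \<partial>P j) \<partial>PiM J P)"
    by (intro Bochner_Integration.integral_cong) (simp_all add: indicator_upd)
  also have "\<dots> = (\<integral>x. (\<integral>y. indicator G (x(j := y)) \<partial>P j) \<partial>PiM J P) * (\<integral>y. h y \<partial>P j)"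
    by (simp add: indicator_upd prob_space.prob_space[OF P_prob] cong: Bochner_Integration.integral_cong)
  also have "(\<integral>x. (\<integral>y. indicator G (x(j := y)) \<partial>P j) \<partial>PiM J P) = measure (PiM I P) G"
    using product_integral_insert[OF J(3,2), of "indicator G :: _ \<Rightarrow> real"] J(1) G
      integrable_bounded[of "indicator G"] by simp
  finally show ?thesis .
qed

lemma integral_indicator_mult_component_pair_PiM:
  fixes Q :: "'u measure" and P :: "'i \<Rightarrow> 'a measure" and h :: "'a \<Rightarrow> real"
  assumes Q: "prob_space Q"
    and P_prob: "\<And>i. prob_space (P i)" and P_space: "\<And>i. space (P i) = UNIV"
    and "finite I" "j \<in> I" and G: "G \<in> sets (Q \<Otimes>\<^sub>M PiM I P)"
    and G_invariant: "\<And>u x y. u \<in> space Q \<Longrightarrow> x \<in> space (PiM I P) \<Longrightarrow>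
      (u, x(j := y)) \<in> G \<longleftrightarrow> (u, x) \<in> G"
    and h: "h \<in> borel_measurable (P j)" "\<And>y. \<bar>h y\<bar> \<le> 1"
  shows "(\<integral>p. indicator G p * h (snd p j) \<partial>(Q \<Otimes>\<^sub>M PiM I P))
    = measure (Q \<Otimes>\<^sub>M PiM I P) G * (\<integral>y. h y \<partial>P j)"
proof -
  interpret pair_prob_space Q "PiM I P"
    by (simp add: pair_prob_space_def pair_sigma_finite_def Q prob_space_PiM P_prob
        prob_space_imp_sigma_finite)
  have Pair_vimage_sets: "Pair u -` G \<in> sets (PiM I P)" for u
    using G by (rule sets_Pair1)
  have integrable_bounded: "integrable (Q \<Otimes>\<^sub>M PiM I P) f"
    if "f \<in> borel_measurable (Q \<Otimes>\<^sub>M PiM I P)" "\<And>p. \<bar>f p\<bar> \<le> 1" for f :: "_ \<Rightarrow> real"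
    by (rule finite_measure.integrable_const_bound[where B=1]) (use that in auto)
  have "integrable (Q \<Otimes>\<^sub>M PiM I P) (\<lambda>p. indicator G p * h (snd p j))"
    using G h \<open>j \<in> I\<close> by (intro integrable_bounded) (simp_all add: abs_mult mult_le_one)
  then have "(\<integral>p. indicator G p * h (snd p j) \<partial>(Q \<Otimes>\<^sub>M PiM I P))
      = (\<integral>u. (\<integral>x. indicator (Pair u -` G) x * h (x j) \<partial>PiM I P) \<partial>Q)"
    by (simp add: integral_fst'[symmetric] indicator_def)
  also have "\<dots> = (\<integral>u. measure (PiM I P) (Pair u -` G) * (\<integral>y. h y \<partial>P j) \<partial>Q)"
    using G_invariant by (intro Bochner_Integration.integral_cong refl
        integral_indicator_mult_component_PiM[OF P_prob P_space \<open>finite I\<close> \<open>j \<in> I\<close> Pair_vimage_sets _ h])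
      auto
  also have "\<dots> = (\<integral>u. (\<integral>x. indicator G (u, x) \<partial>PiM I P) \<partial>Q) * (\<integral>y. h y \<partial>P j)"
  proof -
    have "measure (PiM I P) (Pair u -` G) = (\<integral>x. indicator G (u, x) \<partial>PiM I P)" for u
    proof -
      have "(\<integral>x. indicator G (u, x) \<partial>PiM I P) = (\<integral>x. indicator (Pair u -` G) x \<partial>PiM I P :: real)"
        by (simp add: indicator_def)
      then show ?thesis using Pair_vimage_sets[of u] by (simp add: sets.Int_space_eq2)
    qed
    then show ?thesis by simp
  qed
  also have "(\<integral>u. (\<integral>x. indicator G (u, x) \<partial>PiM I P) \<partial>Q) = (\<integral>p. indicator G p \<partial>(Q \<Otimes>\<^sub>M PiM I P) :: real)"
    using G by (intro integral_fst' integrable_bounded) simp_all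
  also have "\<dots> = measure (Q \<Otimes>\<^sub>M PiM I P) G"
    using G by (simp add: sets.Int_space_eq2)
  finally show ?thesis .
qed

lemma min_sum_le_sum_min:
  fixes a :: "'a \<Rightarrow> real"
  assumes "finite A" "\<And>x. x \<in> A \<Longrightarrow> 0 \<le> a x"
  shows "min (\<Sum>x\<in>A. a x) 1 \<le> (\<Sum>x\<in>A. min (a x) 1)"
  using assms
proof (induction A rule: finite_induct)
  case (insert x F)
  have "0 \<le> (\<Sum>y\<in>F. a y)" using insert by (auto intro: sum_nonneg)
  then have "min (a x + (\<Sum>y\<in>F. a y)) 1 \<le> min (a x) 1 + min (\<Sum>y\<in>F. a y) 1"
    using insert(4)[of x] by (auto simp: min_def)
  then show ?case using insert by simp
qed simp

lemma one_le_sum_truncated: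
  fixes f :: "'a \<Rightarrow> real"
  assumes "finite A" "0 < \<kappa>" "\<kappa> \<le> (\<Sum>x\<in>A. f x)"
  shows "1 \<le> (\<Sum>x\<in>A. min (max (f x) 0 / \<kappa>) 1)"
proof -
  have "1 \<le> (\<Sum>x\<in>A. f x) / \<kappa>" using assms(2,3) by simp
  also have "\<dots> \<le> (\<Sum>x\<in>A. max (f x) 0 / \<kappa>)"
    by (simp add: sum_divide_distrib divide_right_mono sum_mono assms(2) less_imp_le)
  finally have "1 \<le> min (\<Sum>x\<in>A. max (f x) 0 / \<kappa>) 1" by simp
  also have "\<dots> \<le> (\<Sum>x\<in>A. min (max (f x) 0 / \<kappa>) 1)"
    using assms(1,2) by (intro min_sum_le_sum_min) auto
  finally show ?thesis .
qed

lemma scales_pos: "\<tau> \<in> scales W \<Longrightarrow> 0 < \<tau>"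
  unfolding scales_def by auto

lemma finite_scales: "finite (scales W)"
proof (rule finite_subset)
  show "scales W \<subseteq> (\<lambda>l. (2::real) ^ l) ` {..nat \<lceil>log 2 (real W)\<rceil>}"
    unfolding scales_def by auto
qed simp

lemma crit_scale_poor:
  assumes "\<exists>\<tau>\<in>scales W. poor M R N c B C \<epsilon> \<tau> (\<sigma> \<tau>)"
  defines "\<kappa> \<equiv> crit_scale M R N c W B C \<epsilon> \<sigma>"
  shows "\<kappa> \<in> scales W" and "poor M R N c B C \<epsilon> \<kappa> (\<sigma> \<kappa>)"
proof -
  have "\<kappa> \<in> {\<tau> \<in> scales W. poor M R N c B C \<epsilon> \<tau> (\<sigma> \<tau>)}"
    unfolding \<kappa>_def crit_scale_def using assms(1) finite_scales by (intro Min_in) auto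
  then show "\<kappa> \<in> scales W" and "poor M R N c B C \<epsilon> \<kappa> (\<sigma> \<kappa>)" by auto
qed

text \<open>An item of \<open>T\<close> outside \<open>S\<^sub>\<tau>\<close> comes at or after position \<open>t\<close> of the ordering, so its
  ratio \<open>r\<^sub>\<tau>/c\<close> is at most the slope; if \<open>c(T) < D\<close> there is no such item.\<close>
lemma rtau_le_outside_S_tau:
  assumes order: "valid_order M R N c B \<tau> \<sigma>" and "poor M R N c B C \<epsilon> \<tau> \<sigma>"
    and "0 < B" "0 < C" and j: "j \<in> Tset N c B - S_tau N c B C \<sigma>" "0 < c j"
  shows "rtau M R \<tau> j \<le> \<epsilon> / B * c j"
proof -
  let ?T = "Tset N c B"
  have bij: "bij_betw \<sigma> {..<card ?T} ?T"
    and ratio_mono: "\<And>k l. k \<le> l \<Longrightarrow> l < card ?T \<Longrightarrow>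
      rtau M R \<tau> (\<sigma> l) / c (\<sigma> l) \<le> rtau M R \<tau> (\<sigma> k) / c (\<sigma> k)"
    using order unfolding valid_order_def by auto
  have big: "C * B \<le> sum c ?T"
    using j by (auto simp: S_tau_def split: if_splits)
  define t where "t = cutoff c \<sigma> (C * B)"
  have S: "S_tau N c B C \<sigma> = \<sigma> ` {..<t}"
    using big by (simp add: S_tau_def t_def)
  have slope: "slope M R N c B C \<tau> \<sigma> = rtau M R \<tau> (\<sigma> (t - 1)) / c (\<sigma> (t - 1))"
    using big by (simp add: slope_def t_def Let_def)
  have "C * B \<le> (\<Sum>k<t. c (\<sigma> k))"
    unfolding t_def cutoff_def
    by (rule LeastI[of _ "card ?T"]) (use big sum.reindex_bij_betw[OF bij, of c] in simp)
  then have "t \<noteq> 0" using \<open>0 < B\<close> \<open>0 < C\<close> by (intro notI) (simp add: mult_le_0_iff)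
  obtain k where k: "k < card ?T" "\<sigma> k = j"
    using bij j(1) by (metis DiffD1 bij_betw_iff_bijections lessThan_iff)
  have "t \<le> k"
    using j(1) k S by (metis DiffD2 imageI lessThan_iff not_le)
  then have "rtau M R \<tau> j / c j \<le> rtau M R \<tau> (\<sigma> (t - 1)) / c (\<sigma> (t - 1))"
    using ratio_mono[of "t - 1" k] k by simp
  also have "\<dots> \<le> \<epsilon> / B"
    using \<open>poor M R N c B C \<epsilon> \<tau> \<sigma>\<close> slope by (simp add: poor_def)
  finally show ?thesis using \<open>0 < c j\<close> by (simp add: pos_divide_le_eq mult.commute)
qed

lemma (in prob_space) distr_pair_indep_set:
  assumes X: "random_variable S X" and Y: "random_variable T Y"
    and indep: "indep_set {X -` A \<inter> space M | A. A \<in> sets S} {Y -` A \<inter> space M | A. A \<in> sets T}"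
  shows "distr M (S \<Otimes>\<^sub>M T) (\<lambda>\<omega>. (X \<omega>, Y \<omega>)) = distr M S X \<Otimes>\<^sub>M distr M T Y"
proof (rule pair_measure_eqI[symmetric])
  show "sigma_finite_measure (distr M S X)" "sigma_finite_measure (distr M T Y)"
    using X Y by (simp_all add: prob_space_distr prob_space_imp_sigma_finite)
  show "sets (distr M S X \<Otimes>\<^sub>M distr M T Y) = sets (distr M (S \<Otimes>\<^sub>M T) (\<lambda>\<omega>. (X \<omega>, Y \<omega>)))"
    by (simp cong: sets_pair_measure_cong)
  fix A B assume "A \<in> sets (distr M S X)" "B \<in> sets (distr M T Y)"
  then have A: "A \<in> sets S" and B: "B \<in> sets T" by simp_all
  have "(\<lambda>\<omega>. (X \<omega>, Y \<omega>)) -` (A \<times> B) \<inter> space M = (X -` A \<inter> space M) \<inter> (Y -` B \<inter> space M)"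
    by auto
  moreover have "prob ((X -` A \<inter> space M) \<inter> (Y -` B \<inter> space M))
      = prob (X -` A \<inter> space M) * prob (Y -` B \<inter> space M)"
    using indep A B unfolding indep_sets2_eq by blast
  ultimately show "emeasure (distr M S X) A * emeasure (distr M T Y) B
      = emeasure (distr M (S \<Otimes>\<^sub>M T) (\<lambda>\<omega>. (X \<omega>, Y \<omega>))) (A \<times> B)"
    using A B X Y by (simp add: emeasure_distr emeasure_eq_measure ennreal_mult)
qed

lemma (in prob_space) integral_truncated_eq_rtau:
  assumes "random_variable borel (R j)" "AE \<omega> in M. 0 \<le> R j \<omega>"
  shows "(\<integral>\<omega>. min (max (R j \<omega>) 0 / \<kappa>) 1 \<partial>M) = rtau M R \<kappa> j"
  unfolding rtau_def using assms by (intro integral_cong_AE) (auto elim!: AE_mp)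

locale adaptive_selection = prob_space M
  for M :: "'w measure" and R :: "'i \<Rightarrow> 'w \<Rightarrow> real" and N :: "'i set"
    and Mu :: "'u measure" and U :: "'w \<Rightarrow> 'u" and \<pi> :: "'u \<Rightarrow> ('i \<times> real) list \<Rightarrow> 'i option" +
  assumes finite_N: "finite N"
    and random_variable_R: "\<And>i. i \<in> N \<Longrightarrow> random_variable borel (R i)"
    and indep_R: "indep_vars (\<lambda>_. borel) R N"
    and random_variable_U: "random_variable Mu U"
    and indep_U_R: "indep_set {U -` A \<inter> space M | A. A \<in> sets Mu}
      {(\<lambda>\<omega>. restrict (\<lambda>i. R i \<omega>) N) -` A \<inter> space M | A. A \<in> sets (PiM N (\<lambda>_. borel))}"
    and policy_in_N: "\<forall>u h i. \<pi> u h = Some i \<longrightarrow> i \<in> N"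
    and sets_selected: "\<And>i. i \<in> N \<Longrightarrow>
      {p \<in> space (Mu \<Otimes>\<^sub>M PiM N (\<lambda>_. borel)). i \<in> selected N \<pi> (fst p) (snd p)}
        \<in> sets (Mu \<Otimes>\<^sub>M PiM N (\<lambda>_. borel))"
begin

definition chosen :: "'w \<Rightarrow> 'i set" where
  "chosen \<omega> = selected N \<pi> (U \<omega>) (\<lambda>i. R i \<omega>)"

lemma chosen_subset: "chosen \<omega> \<subseteq> N"
  unfolding chosen_def by (rule selected_subset[OF policy_in_N])

lemma chosen_eq_selected_restrict: "chosen \<omega> = selected N \<pi> (U \<omega>) (\<lambda>i\<in>N. R i \<omega>)"
  unfolding chosen_def by (rule selected_cong[OF policy_in_N]) simp

lemma random_variable_rewards: "random_variable (PiM N (\<lambda>_. borel)) (\<lambda>\<omega>. \<lambda>i\<in>N. R i \<omega>)"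
  by (rule measurable_restrict) (rule random_variable_R)

lemma random_variable_seed_rewards:
  "random_variable (Mu \<Otimes>\<^sub>M PiM N (\<lambda>_. borel)) (\<lambda>\<omega>. (U \<omega>, \<lambda>i\<in>N. R i \<omega>))"
  using random_variable_U random_variable_rewards by measurable

lemma events_chosen:
  assumes "j \<in> N"
  shows "{\<omega> \<in> space M. j \<in> chosen \<omega>} \<in> events"
proof -
  have "{\<omega> \<in> space M. j \<in> chosen \<omega>} = (\<lambda>\<omega>. (U \<omega>, \<lambda>i\<in>N. R i \<omega>)) -`
      {p \<in> space (Mu \<Otimes>\<^sub>M PiM N (\<lambda>_. borel)). j \<in> selected N \<pi> (fst p) (snd p)} \<inter> space M"
    using measurable_space[OF random_variable_seed_rewards] by (auto simp: chosen_eq_selected_restrict)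
  then show ?thesis
    using measurable_sets[OF random_variable_seed_rewards sets_selected[OF assms]] by simp
qed

lemma distr_seed_rewards:
  assumes "N \<noteq> {}"
  shows "distr M (Mu \<Otimes>\<^sub>M PiM N (\<lambda>_. borel)) (\<lambda>\<omega>. (U \<omega>, \<lambda>i\<in>N. R i \<omega>))
    = distr M Mu U \<Otimes>\<^sub>M PiM N (\<lambda>i. distr M borel (R i))"
proof -
  have "distr M (Mu \<Otimes>\<^sub>M PiM N (\<lambda>_. borel)) (\<lambda>\<omega>. (U \<omega>, \<lambda>i\<in>N. R i \<omega>))
      = distr M Mu U \<Otimes>\<^sub>M distr M (PiM N (\<lambda>_. borel)) (\<lambda>\<omega>. \<lambda>i\<in>N. R i \<omega>)"
    using random_variable_U random_variable_rewards indep_U_R by (rule distr_pair_indep_set)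
  moreover have "distr M (PiM N (\<lambda>_. borel)) (\<lambda>\<omega>. \<lambda>i\<in>N. R i \<omega>) = PiM N (\<lambda>i. distr M borel (R i))"
    using indep_vars_iff_distr_eq_PiM'[OF assms random_variable_R] indep_R by simp
  ultimately show ?thesis by simp
qed

text \<open>The decision to select \<open>j\<close> does not depend on the reward of \<open>j\<close>, which is independent of
  the seed and of the other rewards.\<close>
lemma integral_indicator_chosen_mult:
  assumes j: "j \<in> N" and h: "h \<in> borel_measurable borel" "\<And>x. \<bar>h x\<bar> \<le> 1"
  shows "(\<integral>\<omega>. indicator {\<omega> \<in> space M. j \<in> chosen \<omega>} \<omega> * h (R j \<omega>) \<partial>M)
    = prob {\<omega> \<in> space M. j \<in> chosen \<omega>} * (\<integral>\<omega>. h (R j \<omega>) \<partial>M)"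
proof -
  let ?X = "Mu \<Otimes>\<^sub>M PiM N (\<lambda>_. borel :: real measure)"
  let ?\<Phi> = "\<lambda>\<omega>. (U \<omega>, \<lambda>i\<in>N. R i \<omega>)"
  \<comment> \<open>padded outside \<open>N\<close>, so that every factor is a probability space\<close>
  define P where "P i = (if i \<in> N then distr M borel (R i) else return borel 0)" for i
  define G where "G = {p \<in> space ?X. j \<in> selected N \<pi> (fst p) (snd p)}"
  have P_prob: "prob_space (P i)" for i
    using random_variable_R by (simp add: P_def prob_space_distr prob_space_return)
  have P_space: "space (P i) = UNIV" for i by (simp add: P_def)
  have law: "distr M ?X ?\<Phi> = distr M Mu U \<Otimes>\<^sub>M PiM N P"
  proof -
    have "PiM N (\<lambda>i. distr M borel (R i)) = PiM N P" by (rule PiM_cong) (simp_all add: P_def)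
    then show ?thesis using distr_seed_rewards j by auto
  qed
  have sets_law: "sets (distr M Mu U \<Otimes>\<^sub>M PiM N P) = sets ?X"
    using sets_distr[of M ?X ?\<Phi>] unfolding law .
  have G: "G \<in> sets ?X" using sets_selected[OF j] by (simp add: G_def)
  have \<Phi>_G: "?\<Phi> -` G \<inter> space M = {\<omega> \<in> space M. j \<in> chosen \<omega>}"
    using measurable_space[OF random_variable_seed_rewards]
    by (auto simp: G_def chosen_eq_selected_restrict)
  have integrand: "(\<lambda>p. indicator G p * h (snd p j)) \<in> borel_measurable ?X"
    using G h j by measurable
  have "(\<integral>\<omega>. indicator {\<omega> \<in> space M. j \<in> chosen \<omega>} \<omega> * h (R j \<omega>) \<partial>M)
      = (\<integral>\<omega>. indicator G (?\<Phi> \<omega>) * h (snd (?\<Phi> \<omega>) j) \<partial>M)"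
    using \<Phi>_G j measurable_space[OF random_variable_seed_rewards]
    by (intro Bochner_Integration.integral_cong) (auto simp: indicator_def)
  also have "\<dots> = (\<integral>p. indicator G p * h (snd p j) \<partial>(distr M Mu U \<Otimes>\<^sub>M PiM N P))"
    using integral_distr[OF random_variable_seed_rewards integrand] by (simp add: law)
  also have "\<dots> = measure (distr M Mu U \<Otimes>\<^sub>M PiM N P) G * (\<integral>y. h y \<partial>P j)"
  proof (rule integral_indicator_mult_component_pair_PiM[OF _ P_prob P_space finite_N j])
    show "prob_space (distr M Mu U)" using random_variable_U by (rule prob_space_distr)
    show "G \<in> sets (distr M Mu U \<Otimes>\<^sub>M PiM N P)" using G sets_law by simp
    show "h \<in> borel_measurable (P j)" using h j by (simp add: P_def)
    fix u x y assume "u \<in> space (distr M Mu U)" "x \<in> space (PiM N P)"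
    then have "(u, x) \<in> space ?X" "(u, x(j := y)) \<in> space ?X"
      using j by (auto simp: space_pair_measure space_PiM P_space PiE_def extensional_def)
    then show "(u, x(j := y)) \<in> G \<longleftrightarrow> (u, x) \<in> G"
      by (simp add: G_def mem_selected_fun_upd)
  qed (use h in simp)
  also have "\<dots> = prob {\<omega> \<in> space M. j \<in> chosen \<omega>} * (\<integral>\<omega>. h (R j \<omega>) \<partial>M)"
    using measure_distr[OF random_variable_seed_rewards G] integral_distr[OF random_variable_R[OF j] h(1)]
    by (simp add: law \<Phi>_G P_def j)
  finally show ?thesis .
qed

lemma expected_cost_chosen:
  assumes "AE \<omega> in M. sum c (chosen \<omega>) \<le> B"
  shows "(\<Sum>j\<in>N. prob {\<omega> \<in> space M. j \<in> chosen \<omega>} * c j) \<le> B"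
proof -
  let ?E = "\<lambda>j. {\<omega> \<in> space M. j \<in> chosen \<omega>}"
  have integrable: "integrable M (\<lambda>\<omega>. indicator (?E j) \<omega> * c j)" if "j \<in> N" for j
    using events_chosen[OF that] by (intro integrable_mult_left integrable_real_indicator) (auto simp: emeasure_eq_measure)
  have "(\<Sum>j\<in>N. prob (?E j) * c j) = (\<integral>\<omega>. (\<Sum>j\<in>N. indicator (?E j) \<omega> * c j) \<partial>M)"
    using integrable events_chosen by (simp add: Bochner_Integration.integral_sum)
  also have "\<dots> \<le> (\<integral>\<omega>. B \<partial>M)"
  proof (rule integral_mono_AE)
    show "AE \<omega> in M. (\<Sum>j\<in>N. indicator (?E j) \<omega> * c j) \<le> B"
      using assms
    proof (rule AE_mp, intro AE_I2 impI)
      fix \<omega> assume "\<omega> \<in> space M" "sum c (chosen \<omega>) \<le> B"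
      moreover have "(\<Sum>j\<in>N. indicator (?E j) \<omega> * c j) = sum c (N \<inter> chosen \<omega>)"
        using \<open>\<omega> \<in> space M\<close> finite_N by (simp add: indicator_def sum.inter_restrict if_distrib)
      ultimately show "(\<Sum>j\<in>N. indicator (?E j) \<omega> * c j) \<le> B"
        using chosen_subset by (simp add: Int_absorb1)
    qed
  qed (use integrable in auto)
  finally show ?thesis by (simp add: prob_space)
qed

lemma prob_chosen_costly:
  fixes c :: "'i \<Rightarrow> real"
  assumes "AE \<omega> in M. sum c (chosen \<omega>) \<le> B" "\<And>i. i \<in> N \<Longrightarrow> 0 \<le> c i" "B < c j"
  shows "prob {\<omega> \<in> space M. j \<in> chosen \<omega>} = 0"
proof (rule prob_eq_0_AE)
  have "j \<notin> chosen \<omega>" if "sum c (chosen \<omega>) \<le> B" for \<omega>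
  proof
    assume "j \<in> chosen \<omega>"
    then have "c j \<le> sum c (chosen \<omega>)"
      using chosen_subset[of \<omega>] finite_subset[OF chosen_subset finite_N] assms(2)
      by (intro member_le_sum) auto
    then show False using that \<open>B < c j\<close> by simp
  qed
  then show "AE \<omega> in M. j \<notin> chosen \<omega>" using assms(1) by auto
qed

lemma sum_chosen_diff_eq:
  fixes f :: "'i \<Rightarrow> real"
  assumes "\<omega> \<in> space M"
  shows "(\<Sum>i\<in>chosen \<omega> - S. f i) = (\<Sum>j\<in>N - S. indicator {\<omega> \<in> space M. j \<in> chosen \<omega>} \<omega> * f j)"
proof -
  have "(\<Sum>j\<in>N - S. indicator {\<omega> \<in> space M. j \<in> chosen \<omega>} \<omega> * f j)
      = (\<Sum>j\<in>N - S. if j \<in> chosen \<omega> then f j else 0)"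
    using assms by (intro sum.cong) (auto simp: indicator_def)
  also have "\<dots> = sum f ((N - S) \<inter> chosen \<omega>)"
    using finite_N by (simp add: sum.inter_restrict)
  also have "(N - S) \<inter> chosen \<omega> = chosen \<omega> - S" using chosen_subset by blast
  finally show ?thesis by simp
qed

text \<open>Markov's inequality for the reward truncated at \<open>\<kappa>\<close>, together with the independence of
  each selection decision from the reward of the selected item.\<close>
lemma prob_reward_diff_ge_le_sum_rtau:
  fixes S :: "'i set" and \<kappa> :: real
  assumes R_nonneg: "\<And>i. i \<in> N \<Longrightarrow> AE \<omega> in M. 0 \<le> R i \<omega>" and "0 < \<kappa>"
  defines "A \<equiv> {\<omega> \<in> space M. \<kappa> \<le> (\<Sum>i\<in>chosen \<omega> - S. R i \<omega>)}"
  shows "A \<in> events"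
    and "prob A \<le> (\<Sum>j\<in>N - S. prob {\<omega> \<in> space M. j \<in> chosen \<omega>} * rtau M R \<kappa> j)"
proof -
  let ?E = "\<lambda>j. {\<omega> \<in> space M. j \<in> chosen \<omega>}"
  let ?trunc = "\<lambda>x. min (max x 0 / \<kappa>) 1"
  have A_eq: "A = {\<omega> \<in> space M. \<kappa> \<le> (\<Sum>j\<in>N - S. indicator (?E j) \<omega> * R j \<omega>)}"
    unfolding A_def by (intro Collect_cong conj_cong refl) (simp add: sum_chosen_diff_eq)
  have [measurable]: "(\<lambda>\<omega>. \<Sum>j\<in>N - S. indicator (?E j) \<omega> * R j \<omega>) \<in> borel_measurable M"
    by (intro borel_measurable_sum borel_measurable_times borel_measurable_indicator
        events_chosen random_variable_R) auto
  show A: "A \<in> events" unfolding A_eq by measurable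
  have trunc_bound: "\<bar>?trunc x\<bar> \<le> 1" for x using \<open>0 < \<kappa>\<close> by simp
  have integrable: "integrable M (\<lambda>\<omega>. indicator (?E j) \<omega> * ?trunc (R j \<omega>))" if "j \<in> N" for j
    using events_chosen[OF that] random_variable_R[OF that] trunc_bound
    by (intro integrable_const_bound[where B=1]) (auto simp: indicator_def)
  have pointwise: "indicator A \<omega> \<le> (\<Sum>j\<in>N - S. indicator (?E j) \<omega> * ?trunc (R j \<omega>))"
    if "\<omega> \<in> space M" for \<omega>
  proof (cases "\<omega> \<in> A")
    case True
    then have "1 \<le> (\<Sum>i\<in>chosen \<omega> - S. ?trunc (R i \<omega>))"
      using finite_subset[OF chosen_subset finite_N] \<open>0 < \<kappa>\<close>
      by (intro one_le_sum_truncated) (auto simp: A_def)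
    then show ?thesis using True that by (simp add: sum_chosen_diff_eq)
  qed (use \<open>0 < \<kappa>\<close> in \<open>auto intro!: sum_nonneg\<close>)
  have "prob A = (\<integral>\<omega>. indicator A \<omega> \<partial>M)" using A by simp
  also have "\<dots> \<le> (\<integral>\<omega>. (\<Sum>j\<in>N - S. indicator (?E j) \<omega> * ?trunc (R j \<omega>)) \<partial>M)"
    using A integrable pointwise
    by (intro integral_mono integrable_real_indicator) (auto simp: emeasure_eq_measure)
  also have "\<dots> = (\<Sum>j\<in>N - S. prob (?E j) * (\<integral>\<omega>. ?trunc (R j \<omega>) \<partial>M))"
    using integrable trunc_bound
    by (simp add: Bochner_Integration.integral_sum)
      (intro sum.cong refl integral_indicator_chosen_mult[where h = ?trunc]; simp)
  also have "\<dots> = (\<Sum>j\<in>N - S. prob (?E j) * rtau M R \<kappa> j)"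
    using random_variable_R R_nonneg by (simp add: integral_truncated_eq_rtau)
  finally show "prob A \<le> (\<Sum>j\<in>N - S. prob (?E j) * rtau M R \<kappa> j)" .
qed

context
  fixes c :: "'i \<Rightarrow> real" and B \<kappa> \<epsilon> :: real and S :: "'i set"
  assumes R_nonneg: "\<And>i. i \<in> N \<Longrightarrow> AE \<omega> in M. 0 \<le> R i \<omega>"
    and cost: "AE \<omega> in M. sum c (chosen \<omega>) \<le> B" and c_pos: "\<And>i. i \<in> N \<Longrightarrow> 0 < c i"
    and B_pos: "0 < B" and \<kappa>_pos: "0 < \<kappa>" and \<epsilon>_nonneg: "0 \<le> \<epsilon>"
    and rtau_le: "\<And>j. j \<in> N - S \<Longrightarrow> c j \<le> B \<Longrightarrow> rtau M R \<kappa> j \<le> \<epsilon> / B * c j"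
begin

text \<open>Items of cost above \<open>B\<close> are never selected, and every other item outside \<open>S\<close> gains at most
  \<open>\<epsilon>/B\<close> per unit of cost; the expected cost is at most \<open>B\<close>.\<close>
lemma prob_reward_diff_ge_le: "prob {\<omega> \<in> space M. \<kappa> \<le> (\<Sum>i\<in>chosen \<omega> - S. R i \<omega>)} \<le> \<epsilon>"
proof -
  let ?p = "\<lambda>j. prob {\<omega> \<in> space M. j \<in> chosen \<omega>}"
  have "?p j * rtau M R \<kappa> j \<le> ?p j * (\<epsilon> / B * c j)" if "j \<in> N - S" for j
  proof (cases "c j \<le> B")
    case False
    then show ?thesis using prob_chosen_costly[OF cost] c_pos by (simp add: less_imp_le)
  next
    case True
    then show ?thesis using rtau_le[OF that True] by (intro mult_left_mono) simp_all
  qed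
  then have "prob {\<omega> \<in> space M. \<kappa> \<le> (\<Sum>i\<in>chosen \<omega> - S. R i \<omega>)}
      \<le> (\<Sum>j\<in>N - S. ?p j * (\<epsilon> / B * c j))"
    using prob_reward_diff_ge_le_sum_rtau(2)[OF R_nonneg \<kappa>_pos] by (meson order_trans sum_mono)
  also have "\<dots> \<le> (\<Sum>j\<in>N. ?p j * (\<epsilon> / B * c j))"
    using finite_N B_pos \<epsilon>_nonneg less_imp_le[OF c_pos]
    by (intro sum_mono2) (auto intro!: mult_nonneg_nonneg)
  also have "\<dots> = \<epsilon> / B * (\<Sum>j\<in>N. ?p j * c j)"
    by (simp add: sum_distrib_left ac_simps)
  also have "\<dots> \<le> \<epsilon> / B * B"
    using expected_cost_chosen[OF cost] B_pos \<epsilon>_nonneg by (intro mult_left_mono) auto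
  finally show ?thesis using B_pos by simp
qed

lemma prob_reward_lt_ge:
  assumes "\<forall>u h i. \<pi> u h = Some i \<longrightarrow> i \<in> N - S"
  shows "1 - \<epsilon> \<le> prob {\<omega> \<in> space M. (\<Sum>i\<in>chosen \<omega>. R i \<omega>) < \<kappa>}"
proof -
  have "chosen \<omega> - S = chosen \<omega>" for \<omega>
    using selected_subset[OF assms] by (auto simp: chosen_def)
  then have "{\<omega> \<in> space M. (\<Sum>i\<in>chosen \<omega>. R i \<omega>) < \<kappa>}
      = space M - {\<omega> \<in> space M. \<kappa> \<le> (\<Sum>i\<in>chosen \<omega> - S. R i \<omega>)}"
    by auto
  then show ?thesis
    using prob_reward_diff_ge_le prob_reward_diff_ge_le_sum_rtau(1)[OF R_nonneg \<kappa>_pos]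
    by (simp add: prob_compl)
qed

end

end

lemma adaptive_selectionI:
  assumes "prob_space M" "finite N" "\<forall>i\<in>N. R i \<in> borel_measurable M"
    and "prob_space.indep_vars M (\<lambda>_. borel) R N" "U \<in> measurable M Mu"
    and "prob_space.indep_set M {U -` A \<inter> space M | A. A \<in> sets Mu}
      {(\<lambda>\<omega>. restrict (\<lambda>i. R i \<omega>) N) -` A \<inter> space M | A. A \<in> sets (PiM N (\<lambda>_. borel))}"
    and "adaptive_policy M R N c B Mu U A \<pi>" "A \<subseteq> N"
  shows "adaptive_selection M R N Mu U \<pi>"
  using assms unfolding adaptive_policy_def adaptive_selection_def adaptive_selection_axioms_def
  by blast

theorem mainTheorem8:
  fixes M :: "'w measure" and R :: "'i \<Rightarrow> 'w \<Rightarrow> real" and N :: "'i set"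
    and c :: "'i \<Rightarrow> real" and W :: nat and B C \<epsilon> :: real
    and \<sigma> :: "real \<Rightarrow> nat \<Rightarrow> 'i"
    and Mu :: "'u measure" and U :: "'w \<Rightarrow> 'u"
  assumes "prob_space M"
    and "finite N"
    and "\<forall>i\<in>N. c i > 0"
    and "\<forall>i\<in>N. R i \<in> borel_measurable M"
    and "\<forall>i\<in>N. AE \<omega> in M. R i \<omega> \<ge> 0"
    and "\<forall>i\<in>N. integrable M (R i)"
    and "prob_space.indep_vars M (\<lambda>_. borel) R N"
    and "W \<ge> 1"
    and "(\<Sum>i\<in>N. \<integral>\<omega>. R i \<omega> \<partial>M) \<le> real W"
    and "B > 0" and "0 < \<epsilon>" and "\<epsilon> < 1" and "C > 0"
    and "\<forall>\<tau>\<in>scales W. valid_order M R N c B \<tau> (\<sigma> \<tau>)"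
    and "\<exists>\<tau>\<in>scales W. poor M R N c B C \<epsilon> \<tau> (\<sigma> \<tau>)"
    and "U \<in> measurable M Mu"
    and "prob_space.indep_set M {U -` A \<inter> space M | A. A \<in> sets Mu}
           {(\<lambda>\<omega>. restrict (\<lambda>i. R i \<omega>) N) -` A \<inter> space M | A. A \<in> sets (PiM N (\<lambda>_. borel))}"
  shows "(let \<kappa> = crit_scale M R N c W B C \<epsilon> \<sigma>;
              S = S_tau N c B C (\<sigma> \<kappa>) in
          (\<forall>\<pi>. adaptive_policy M R N c B Mu U (N - S) \<pi> \<longrightarrow>
                measure M {\<omega> \<in> space M. (\<Sum>i\<in>selected N \<pi> (U \<omega>) (\<lambda>i. R i \<omega>). R i \<omega>) < \<kappa>}
                  \<ge> 1 - \<epsilon>) \<and>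
          (\<forall>\<pi>. adaptive_policy M R N c B Mu U N \<pi> \<longrightarrow>
                measure M {\<omega> \<in> space M. (\<Sum>i\<in>selected N \<pi> (U \<omega>) (\<lambda>i. R i \<omega>) - S. R i \<omega>) \<ge> \<kappa>}
                  \<le> \<epsilon>))"
proof -
  interpret prob_space M by fact
  define \<kappa> where "\<kappa> = crit_scale M R N c W B C \<epsilon> \<sigma>"
  define S where "S = S_tau N c B C (\<sigma> \<kappa>)"
  have \<kappa>: "\<kappa> \<in> scales W" "poor M R N c B C \<epsilon> \<kappa> (\<sigma> \<kappa>)"
    using crit_scale_poor[OF assms(15)] by (simp_all add: \<kappa>_def)
  have rtau_le: "rtau M R \<kappa> j \<le> \<epsilon> / B * c j" if "j \<in> N - S" "c j \<le> B" for j
    using assms(14) \<kappa> assms(3,10,13) that unfolding S_def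
    by (intro rtau_le_outside_S_tau[where C = C and \<sigma> = "\<sigma> \<kappa>"]) (auto simp: Tset_def)
  note hyps = assms(5,3,10) scales_pos[OF \<kappa>(1)] less_imp_le[OF assms(11)] rtau_le
  show ?thesis
    unfolding Let_def \<kappa>_def[symmetric] S_def[symmetric]
  proof (intro conjI allI impI)
    fix \<pi> assume \<pi>: "adaptive_policy M R N c B Mu U (N - S) \<pi>"
    interpret adaptive_selection M R N Mu U \<pi>
      using adaptive_selectionI[OF assms(1,2,4,7,16,17) \<pi>] by blast
    show "1 - \<epsilon> \<le> prob {\<omega> \<in> space M. (\<Sum>i\<in>selected N \<pi> (U \<omega>) (\<lambda>i. R i \<omega>). R i \<omega>) < \<kappa>}"
      using prob_reward_lt_ge[of c B \<kappa> \<epsilon> S] \<pi> hyps by (simp add: chosen_def adaptive_policy_def)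
  next
    fix \<pi> assume \<pi>: "adaptive_policy M R N c B Mu U N \<pi>"
    interpret adaptive_selection M R N Mu U \<pi>
      using adaptive_selectionI[OF assms(1,2,4,7,16,17) \<pi>] by blast
    show "prob {\<omega> \<in> space M. \<kappa> \<le> (\<Sum>i\<in>selected N \<pi> (U \<omega>) (\<lambda>i. R i \<omega>) - S. R i \<omega>)} \<le> \<epsilon>"
      using prob_reward_diff_ge_le[of c B \<kappa> \<epsilon> S] \<pi> hyps by (simp add: chosen_def adaptive_policy_def)
  qed
qed

end
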